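(* Let $K=\mathbb{Q}(\sqrt{-D})$ with $D$ a square-free positive integer, let $\mathcal{O}$ be its ring of integers, let $M_1$ be a positive integer, and let $c\in K$. Set $\Delta_c=\{M_1xc^{2^n}: x\in\mathcal{O},\ n\in\mathbb{N}\}$. If $c\notin\mathcal{O}$, then $\Delta_c$ does not have the B-C property.
   Context: A set $A\subset\mathbb{C}$ has the B-C property if there is $K_A$ such that for all $m,n\in\mathbb{Z}$ the square $\{z: m\le\mathrm{Re}\,z\le m+1,\ n\le\mathrm{Im}\,z\le n+1\}$ contains fewer than $K_A$ elements of $A$. *)

theory Defs
  imports "HOL-Analysis.Analysis" "HOL-Computational_Algebra.Computational_Algebra"
begin

definition quad_field :: "nat \<Rightarrow> complex set" where
  "quad_field D = {of_real a + of_real b * \<i> * of_real (sqrt (real D)) | a b. a \<in> \<rat> \<and> b \<in> \<rat>}"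

definition ring_of_integers :: "nat \<Rightarrow> complex set" where
  "ring_of_integers D = {z \<in> quad_field D. algebraic_int z}"

definition unit_square :: "int \<Rightarrow> int \<Rightarrow> complex set" where
  "unit_square m n = {z. of_int m \<le> Re z \<and> Re z \<le> of_int m + 1 \<and> of_int n \<le> Im z \<and> Im z \<le> of_int n + 1}"

definition BC_property :: "complex set \<Rightarrow> bool" where
  "BC_property A \<longleftrightarrow> (\<exists>K::nat. \<forall>m n. finite (A \<inter> unit_square m n) \<and> card (A \<inter> unit_square m n) < K)"

definition Delta_c :: "nat \<Rightarrow> nat \<Rightarrow> complex \<Rightarrow> complex set" where
  "Delta_c D M1 c = {of_nat M1 * x * c ^ (2 ^ n) | x n. x \<in> ring_of_integers D}"

end

theory Submission
  imports Defs
begin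

(* Let R = Z[sqrt(-D)], a subring of the ring of integers. If h c^(2^m) lay in R for a fixed
   h ~= 0 and all m, then 2 Re c and |c|^2 would be integers, since 2 Re and |.|^2 of c^(2^m)
   evolve by x -> x^2 + (integer), which squares reduced denominators; so c would be an
   algebraic integer. Hence, by pigeonhole modulo s R, for every s > 0 some group
   M1 c^(2^m) Z + s R has nonzero elements of arbitrarily small modulus. This grows finite sets
   S of points of Delta_c in a disc of radius 1/4 with S + s R inside Delta_c: a small
   g = M1 c^(2^m) x + s y has a multiple g r near the centre and outside S; translating
   everything by -s y r turns g r into M1 x r c^(2^m), and replacing s by a suitable multiple
   restores the invariant. A disc of radius 1/4 meets at most four unit squares. *)

definition zsqrt :: "nat \<Rightarrow> complex set" where
  "zsqrt D = {of_int a + of_int b * \<i> * of_real (sqrt (real D)) | a b. True}"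

lemma zsqrtI: "of_int a + of_int b * \<i> * of_real (sqrt (real D)) \<in> zsqrt D"
  unfolding zsqrt_def by blast

lemma zsqrtE:
  assumes "x \<in> zsqrt D"
  obtains a b :: int where "x = of_int a + of_int b * \<i> * of_real (sqrt (real D))"
  using assms unfolding zsqrt_def by blast

lemma zsqrt_of_int [simp, intro]: "of_int k \<in> zsqrt D"
  using zsqrtI[of k 0 D] by simp

lemma zsqrt_of_nat [simp, intro]: "of_nat k \<in> zsqrt D"
  using zsqrt_of_int[of "int k" D] by simp

lemma zsqrt_add [intro]:
  assumes "x \<in> zsqrt D" "y \<in> zsqrt D"
  shows "x + y \<in> zsqrt D"
proof -
  obtain a b a' b' where "x = of_int a + of_int b * \<i> * of_real (sqrt (real D))"
    and "y = of_int a' + of_int b' * \<i> * of_real (sqrt (real D))"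
    using assms by (meson zsqrtE)
  then have "x + y = of_int (a + a') + of_int (b + b') * \<i> * of_real (sqrt (real D))"
    by (simp add: algebra_simps)
  then show ?thesis by (simp only: zsqrtI)
qed

lemma zsqrt_uminus [intro]:
  assumes "x \<in> zsqrt D"
  shows "- x \<in> zsqrt D"
proof -
  obtain a b where "x = of_int a + of_int b * \<i> * of_real (sqrt (real D))"
    using assms by (rule zsqrtE)
  then have "- x = of_int (- a) + of_int (- b) * \<i> * of_real (sqrt (real D))"
    by simp
  then show ?thesis by (simp only: zsqrtI)
qed

lemma zsqrt_cnj [intro]:
  assumes "x \<in> zsqrt D"
  shows "cnj x \<in> zsqrt D"
proof -
  obtain a b where "x = of_int a + of_int b * \<i> * of_real (sqrt (real D))"
    using assms by (rule zsqrtE)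
  then have "cnj x = of_int a + of_int (- b) * \<i> * of_real (sqrt (real D))"
    by simp
  then show ?thesis by (simp only: zsqrtI)
qed

lemma zsqrt_mult [intro]:
  assumes "x \<in> zsqrt D" "y \<in> zsqrt D"
  shows "x * y \<in> zsqrt D"
proof -
  obtain a b a' b' where x: "x = of_int a + of_int b * \<i> * of_real (sqrt (real D))"
    and y: "y = of_int a' + of_int b' * \<i> * of_real (sqrt (real D))"
    using assms by (meson zsqrtE)
  have "(of_real (sqrt (real D)))\<^sup>2 = (of_nat D :: complex)"
    by (metis of_nat_0_le_iff of_real_of_nat_eq of_real_power real_sqrt_pow2)
  then have "x * y = of_int (a * a' - int D * b * b') + of_int (a * b' + a' * b) * \<i> * of_real (sqrt (real D))"
    unfolding x y by (simp add: algebra_simps power2_eq_square)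
  then show ?thesis by (simp only: zsqrtI)
qed

lemma zsqrt_power [intro]: "x \<in> zsqrt D \<Longrightarrow> x ^ n \<in> zsqrt D"
  by (induction n) (auto simp: zsqrt_of_int[of 1, simplified])

lemma zsqrt_Re_Ints: "x \<in> zsqrt D \<Longrightarrow> Re x \<in> \<int>"
  by (elim zsqrtE) simp

lemma zsqrt_norm_Ints: "x \<in> zsqrt D \<Longrightarrow> (cmod x)\<^sup>2 \<in> \<int>"
proof (elim zsqrtE)
  fix a b :: int
  assume x: "x = of_int a + of_int b * \<i> * of_real (sqrt (real D))"
  have "(cmod x)\<^sup>2 = of_int (a\<^sup>2 + b\<^sup>2 * int D)"
    unfolding x cmod_power2 by (simp add: power_mult_distrib)
  then show "(cmod x)\<^sup>2 \<in> \<int>" by simp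
qed

lemma algebraic_int_if_Re_norm_Ints:
  fixes z :: complex
  assumes "2 * Re z \<in> \<int>" "(cmod z)\<^sup>2 \<in> \<int>"
  shows "algebraic_int z"
proof -
  obtain t n where t: "2 * Re z = of_int t" and n: "(cmod z)\<^sup>2 = of_int n"
    using assms by (auto elim!: Ints_cases)
  have tz: "z + cnj z = of_int t" and nz: "z * cnj z = of_int n"
    using complex_add_cnj[of z] complex_norm_square[of z] by (simp_all add: t n)
  have "poly [:of_int n, - of_int t, 1:] z = z * cnj z - (z + cnj z) * z + z * z"
    by (simp only: tz nz) (simp add: algebra_simps)
  also have "\<dots> = 0"
    by (simp add: algebra_simps)
  finally have "poly [:of_int n, - of_int t, 1:] z = 0" .
  then show ?thesis
    by (intro algebraic_int.intros[of "[:of_int n, - of_int t, 1:]"])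
       (auto simp: coeff_pCons split: nat.splits)
qed

lemma zsqrt_subset_ring_of_integers: "zsqrt D \<subseteq> ring_of_integers D"
proof
  fix x assume x: "x \<in> zsqrt D"
  then obtain a b where ab: "x = of_int a + of_int b * \<i> * of_real (sqrt (real D))"
    by (rule zsqrtE)
  have "x \<in> quad_field D"
    unfolding quad_field_def ab by (intro CollectI exI[of _ "of_int a"] exI[of _ "of_int b"]) simp
  moreover have "algebraic_int x"
    using zsqrt_Re_Ints[OF x] zsqrt_norm_Ints[OF x] by (intro algebraic_int_if_Re_norm_Ints) simp_all
  ultimately show "x \<in> ring_of_integers D"
    unfolding ring_of_integers_def by blast
qed

lemma quad_fieldE:
  assumes "c \<in> quad_field D"
  obtains a b :: real where "a \<in> \<rat>" "b \<in> \<rat>"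
    "c = of_real a + of_real b * \<i> * of_real (sqrt (real D))"
  using assms unfolding quad_field_def by blast

lemma quad_field_Re_norm_Rats:
  assumes "c \<in> quad_field D"
  shows "Re c \<in> \<rat>" and "(cmod c)\<^sup>2 \<in> \<rat>"
proof -
  obtain a b where ab: "a \<in> \<rat>" "b \<in> \<rat>" and c: "c = of_real a + of_real b * \<i> * of_real (sqrt (real D))"
    using assms by (rule quad_fieldE)
  show "Re c \<in> \<rat>" using ab by (simp add: c)
  have "(cmod c)\<^sup>2 = a\<^sup>2 + b\<^sup>2 * of_nat D"
    unfolding c cmod_power2 by (simp add: power_mult_distrib)
  then show "(cmod c)\<^sup>2 \<in> \<rat>" using ab by simp
qed

lemma quad_field_int_multiple_in_zsqrt:
  assumes "c \<in> quad_field D"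
  obtains q :: int where "q > 0" "of_int q * c \<in> zsqrt D"
proof -
  obtain a b where ab: "a \<in> \<rat>" "b \<in> \<rat>" and c: "c = of_real a + of_real b * \<i> * of_real (sqrt (real D))"
    using assms by (rule quad_fieldE)
  obtain A q1 where A: "q1 > 0" "a = of_int A / of_int q1" using ab(1) by (auto elim: Rats_cases')
  obtain B q2 where B: "q2 > 0" "b = of_int B / of_int q2" using ab(2) by (auto elim: Rats_cases')
  have "of_int (q1 * q2) * c = of_int (A * q2) + of_int (B * q1) * \<i> * of_real (sqrt (real D))"
  proof -
    have "complex_of_real a = of_int A / of_int q1" "complex_of_real b = of_int B / of_int q2"
      using A(2) B(2) by simp_all
    with A(1) B(1) show ?thesis
      unfolding c by (simp only:) (simp add: field_simps)
  qed
  then show ?thesis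
    using A(1) B(1) by (intro that[of "q1 * q2"]) (simp_all only: zsqrtI mult_pos_pos)
qed

lemma power_two_power_Suc: "(x :: 'a :: monoid_mult) ^ 2 ^ Suc k = (x ^ 2 ^ k)\<^sup>2"
  by (simp only: power_Suc power_mult mult.commute[of 2])

lemma squaring_sequence_denominator:
  fixes t :: "nat \<Rightarrow> real" and u v :: int
  assumes "v > 0" "coprime u v" "t 0 = of_int u / of_int v"
    and step: "\<And>k. t (Suc k) - (t k)\<^sup>2 \<in> \<int>"
  shows "\<exists>u'. coprime u' v \<and> t k = of_int u' / of_int v ^ 2 ^ k"
proof (induction k)
  case 0
  then show ?case using assms by auto
next
  case (Suc k)
  then obtain u' where u': "coprime u' v" "t k = of_int u' / of_int v ^ 2 ^ k"
    by blast
  obtain n where n: "t (Suc k) - (t k)\<^sup>2 = of_int n"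
    using step by (meson Ints_cases)
  define u'' where "u'' = (n * v ^ (2 ^ Suc k - 1)) * v + u'\<^sup>2"
  have "gcd v u'' = gcd v (u'\<^sup>2)"
    unfolding u''_def by (rule gcd_add_mult)
  moreover have "coprime (u'\<^sup>2) v"
    using u'(1) by simp
  ultimately have "coprime u'' v"
    by (metis coprime_iff_gcd_eq_1 gcd.commute)
  moreover have "t (Suc k) = of_int u'' / of_int v ^ 2 ^ Suc k"
  proof -
    have "v ^ (2 ^ Suc k - 1) * v = v ^ 2 ^ Suc k"
      by (simp flip: power_Suc2)
    then have "of_int u'' = of_int n * of_int v ^ 2 ^ Suc k + (of_int u' :: real)\<^sup>2"
      unfolding u''_def by (metis mult.assoc add.commute of_int_add of_int_mult of_int_power)
    moreover have "(of_int v :: real) ^ 2 ^ Suc k = (of_int v ^ 2 ^ k)\<^sup>2"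
      by (rule power_two_power_Suc)
    ultimately show ?thesis
      using n u'(2) \<open>v > 0\<close> by (simp add: field_simps power_divide)
  qed
  ultimately show ?case by blast
qed

lemma Ints_of_squaring_sequence:
  fixes t :: "nat \<Rightarrow> real" and h :: int
  assumes "t 0 \<in> \<rat>" "h \<noteq> 0"
    and step: "\<And>k. t (Suc k) - (t k)\<^sup>2 \<in> \<int>"
    and bounded_denominator: "\<And>k. of_int h * t k \<in> \<int>"
  shows "t 0 \<in> \<int>"
proof (rule ccontr)
  assume "t 0 \<notin> \<int>"
  obtain u v where uv: "v > 0" "coprime u v" "t 0 = of_int u / of_int v"
    using assms(1) by (rule Rats_cases')
  with \<open>t 0 \<notin> \<int>\<close> have "v \<noteq> 1" by auto
  with uv(1) have "v \<ge> 2" by linarith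
  define k where "k = nat \<bar>h\<bar>"
  obtain u' where u': "coprime u' v" "t k = of_int u' / of_int v ^ 2 ^ k"
    using squaring_sequence_denominator[OF uv step] by blast
  obtain w where w: "of_int h * t k = of_int w"
    using bounded_denominator by (meson Ints_cases)
  have "of_int (h * u') = of_int h * t k * (of_int v ^ 2 ^ k :: real)"
    using u'(2) uv(1) by simp
  also have "\<dots> = of_int (w * v ^ 2 ^ k)"
    by (simp add: w)
  finally have "of_int (h * u') = (of_int (w * v ^ 2 ^ k) :: real)" .
  then have "v ^ 2 ^ k dvd h * u'"
    by (metis dvd_triv_right of_int_eq_iff)
  then have "v ^ 2 ^ k dvd h"
    using u'(1) by (simp add: coprime_dvd_mult_left_iff coprime_commute)
  then have "v ^ 2 ^ k \<le> \<bar>h\<bar>"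
    using \<open>h \<noteq> 0\<close> dvd_imp_le_int by (metis abs_of_pos uv(1) zero_less_power)
  moreover have "\<bar>h\<bar> < 2 ^ k"
    unfolding k_def by (metis abs_ge_zero int_nat_eq of_nat_less_two_power of_nat_numeral of_nat_power)
  moreover have "(2::int) ^ k \<le> 2 ^ 2 ^ k"
    by (intro power_increasing) (simp_all add: less_imp_le)
  moreover have "(2::int) ^ 2 ^ k \<le> v ^ 2 ^ k"
    using \<open>v \<ge> 2\<close> by (intro power_mono) simp_all
  ultimately show False by linarith
qed

lemma norm_Ints_if_multiples_of_powers_in_zsqrt:
  assumes "c \<in> quad_field D" "h \<noteq> 0" and in_zsqrt: "\<And>k. of_int h * c ^ 2 ^ k \<in> zsqrt D"
  shows "(cmod c)\<^sup>2 \<in> \<int>"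
proof -
  define n where "n k = (cmod (c ^ 2 ^ k))\<^sup>2" for k
  have "n 0 \<in> \<int>"
  proof (rule Ints_of_squaring_sequence[of n "h\<^sup>2"])
    show "n 0 \<in> \<rat>" "h\<^sup>2 \<noteq> 0"
      using quad_field_Re_norm_Rats[OF assms(1)] assms(2) by (simp_all add: n_def)
    show "n (Suc k) - (n k)\<^sup>2 \<in> \<int>" for k
      by (simp only: n_def power_two_power_Suc norm_power) simp
    show "of_int (h\<^sup>2) * n k \<in> \<int>" for k
      using zsqrt_norm_Ints[OF in_zsqrt] by (simp add: n_def norm_mult power_mult_distrib)
  qed
  then show ?thesis
    by (simp add: n_def)
qed

lemma algebraic_int_if_multiples_of_powers_in_zsqrt:
  assumes "c \<in> quad_field D" "h \<noteq> 0" and in_zsqrt: "\<And>k. of_int h * c ^ 2 ^ k \<in> zsqrt D"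
  shows "algebraic_int c"
proof -
  define t where "t k = 2 * Re (c ^ 2 ^ k)" for k
  have "t 0 \<in> \<int>"
  proof (rule Ints_of_squaring_sequence[of t h])
    show "t 0 \<in> \<rat>"
      using quad_field_Re_norm_Rats[OF assms(1)] by (simp add: t_def)
    show "h \<noteq> 0" by fact
    have "(cmod (c ^ 2 ^ k))\<^sup>2 = ((cmod c)\<^sup>2) ^ 2 ^ k" for k
      unfolding norm_power power_mult[symmetric] by (simp add: mult.commute)
    then have "(cmod (c ^ 2 ^ k))\<^sup>2 \<in> \<int>" for k
      using norm_Ints_if_multiples_of_powers_in_zsqrt[OF assms] by (metis Ints_power)
    moreover have "2 * Re (w\<^sup>2) - (2 * Re w)\<^sup>2 = - 2 * (cmod w)\<^sup>2" for w
      unfolding cmod_power2 by (simp add: power2_eq_square algebra_simps)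
    then have "t (Suc k) - (t k)\<^sup>2 = - 2 * (cmod (c ^ 2 ^ k))\<^sup>2" for k
      by (simp only: t_def power_two_power_Suc)
    ultimately show "t (Suc k) - (t k)\<^sup>2 \<in> \<int>" for k
      by simp
    show "of_int h * t k \<in> \<int>" for k
      using zsqrt_Re_Ints[OF in_zsqrt] by (simp add: t_def mult.left_commute[of _ 2])
  qed
  then show ?thesis
    using norm_Ints_if_multiples_of_powers_in_zsqrt[OF assms]
    by (intro algebraic_int_if_Re_norm_Ints) (simp_all add: t_def)
qed

lemma floor_mod_eq_imp_close:
  fixes u1 u2 \<sigma> :: real and L :: nat
  assumes "\<sigma> > 0" "L > 0" and "\<lfloor>L * u1 / \<sigma>\<rfloor> mod int L = \<lfloor>L * u2 / \<sigma>\<rfloor> mod int L"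
  obtains a :: int where "\<bar>u1 - u2 - \<sigma> * a\<bar> < \<sigma> / L"
proof -
  obtain a where a: "\<lfloor>L * u1 / \<sigma>\<rfloor> - \<lfloor>L * u2 / \<sigma>\<rfloor> = int L * a"
    using assms(3) by (metis mod_eq_dvd_iff dvdE)
  then have "of_int \<lfloor>L * u1 / \<sigma>\<rfloor> - of_int \<lfloor>L * u2 / \<sigma>\<rfloor> = real L * of_int a"
    by (metis of_int_diff of_int_mult of_int_of_nat_eq)
  then have "\<bar>L * u1 / \<sigma> - L * u2 / \<sigma> - real L * of_int a\<bar> < 1"
    using floor_correct[of "L * u1 / \<sigma>"] floor_correct[of "L * u2 / \<sigma>"] by linarith
  also have "L * u1 / \<sigma> - L * u2 / \<sigma> - real L * of_int a = (L / \<sigma>) * (u1 - u2 - \<sigma> * a)"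
    using assms(1) by (simp add: field_simps)
  finally have "(L / \<sigma>) * \<bar>u1 - u2 - \<sigma> * a\<bar> < 1"
    using assms(1) by (simp add: abs_mult)
  then show ?thesis
    using assms(1,2) by (intro that[of a]) (simp add: field_simps)
qed

lemma pigeonhole_close_mod_zsqrt:
  fixes w :: "nat \<Rightarrow> complex" and \<sigma> :: real
  assumes "D > 0" "\<sigma> > 0" "L > 0"
  obtains i j \<rho> where "i < j" "j \<le> L\<^sup>2" "\<rho> \<in> zsqrt D"
    "cmod (w j - w i - of_real \<sigma> * \<rho>) < \<sigma> * (1 + sqrt D) / L"
proof -
  define \<tau> where "\<tau> = \<sigma> * sqrt D"
  have "\<tau> > 0" using assms unfolding \<tau>_def by simp
  \<comment> \<open>the cell, in an L by L grid on the period rectangle of \<open>\<sigma> * zsqrt D\<close>, containing \<open>w k\<close>\<close>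
  define cell where
    "cell k = (\<lfloor>L * Re (w k) / \<sigma>\<rfloor> mod int L, \<lfloor>L * Im (w k) / \<tau>\<rfloor> mod int L)" for k
  have "cell ` {0..L\<^sup>2} \<subseteq> {0..<int L} \<times> {0..<int L}"
    using assms(3) by (auto simp: cell_def)
  then have "\<not> inj_on cell {0..L\<^sup>2}"
    by (metis card_atLeastAtMost card_atLeastLessThan_int card_cartesian_product card_inj_on_le
        diff_zero finite_SigmaI finite_atLeastLessThan_int lessI nat_int not_le power2_eq_square)
  then obtain i j where ij: "i < j" "j \<le> L\<^sup>2" "cell i = cell j"
    unfolding inj_on_def by (metis atLeastAtMost_iff linorder_neqE_nat order.strict_trans2 less_imp_le)
  have "\<lfloor>L * Re (w j) / \<sigma>\<rfloor> mod int L = \<lfloor>L * Re (w i) / \<sigma>\<rfloor> mod int L"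
    and "\<lfloor>L * Im (w j) / \<tau>\<rfloor> mod int L = \<lfloor>L * Im (w i) / \<tau>\<rfloor> mod int L"
    using ij(3) by (simp_all add: cell_def)
  then obtain a b :: int where a: "\<bar>Re (w j) - Re (w i) - \<sigma> * a\<bar> < \<sigma> / L"
    and b: "\<bar>Im (w j) - Im (w i) - \<tau> * b\<bar> < \<tau> / L"
    by (metis floor_mod_eq_imp_close[OF \<open>\<sigma> > 0\<close> \<open>L > 0\<close>]
        floor_mod_eq_imp_close[OF \<open>\<tau> > 0\<close> \<open>L > 0\<close>])
  define \<rho> where "\<rho> = of_int a + of_int b * \<i> * of_real (sqrt (real D))"
  let ?g = "w j - w i - of_real \<sigma> * \<rho>"
  have "cmod ?g \<le> \<bar>Re ?g\<bar> + \<bar>Im ?g\<bar>"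
    by (rule cmod_le)
  also have "\<dots> < \<sigma> / L + \<tau> / L"
    using a b by (simp add: \<rho>_def \<tau>_def algebra_simps)
  also have "\<dots> = \<sigma> * (1 + sqrt D) / L"
    by (simp add: \<tau>_def add_divide_distrib distrib_left)
  finally show ?thesis
    using ij by (intro that[of i j \<rho>]) (simp_all add: \<rho>_def zsqrtI)
qed

lemma zsqrt_near:
  assumes "D > 0"
  obtains \<rho> where "\<rho> \<in> zsqrt D" "cmod (\<tau> - \<rho>) \<le> (1 + sqrt D) / 2"
proof -
  define \<rho> where
    "\<rho> = of_int (round (Re \<tau>)) + of_int (round (Im \<tau> / sqrt D)) * \<i> * of_real (sqrt (real D))"
  have "Im (\<tau> - \<rho>) = sqrt D * (Im \<tau> / sqrt D - of_int (round (Im \<tau> / sqrt D)))"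
    using assms by (simp add: \<rho>_def field_simps)
  then have "\<bar>Im (\<tau> - \<rho>)\<bar> = sqrt D * \<bar>Im \<tau> / sqrt D - of_int (round (Im \<tau> / sqrt D))\<bar>"
    by (simp add: abs_mult)
  also have "\<dots> \<le> sqrt D * (1 / 2)"
    using of_int_round_abs_le[of "Im \<tau> / sqrt D"] by (intro mult_left_mono) (simp_all add: abs_minus_commute)
  finally have "\<bar>Im (\<tau> - \<rho>)\<bar> \<le> sqrt D / 2" by simp
  moreover have "\<bar>Re (\<tau> - \<rho>)\<bar> \<le> 1 / 2"
    using of_int_round_abs_le[of "Re \<tau>"] by (simp add: \<rho>_def abs_minus_commute)
  ultimately have "cmod (\<tau> - \<rho>) \<le> (1 + sqrt D) / 2"
    using cmod_le[of "\<tau> - \<rho>"] by (simp add: add_divide_distrib)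
  then show ?thesis
    by (intro that[of \<rho>]) (simp_all add: \<rho>_def zsqrtI)
qed

lemma zsqrt_near_avoiding:
  assumes "D > 0" "finite F"
  obtains \<rho> where "\<rho> \<in> zsqrt D" "\<rho> \<notin> F" "cmod (\<tau> - \<rho>) \<le> (1 + sqrt D) / 2 + card F"
proof -
  obtain \<rho>\<^sub>0 where \<rho>\<^sub>0: "\<rho>\<^sub>0 \<in> zsqrt D" "cmod (\<tau> - \<rho>\<^sub>0) \<le> (1 + sqrt D) / 2"
    using zsqrt_near[OF assms(1)] .
  have "inj_on (\<lambda>i. \<rho>\<^sub>0 + of_nat i) {0..card F}"
    by (simp add: inj_on_def)
  then have "\<not> (\<lambda>i. \<rho>\<^sub>0 + of_nat i) ` {0..card F} \<subseteq> F"
    by (metis assms(2) card_atLeastAtMost card_image card_mono diff_zero lessI not_le)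
  then obtain i where i: "i \<le> card F" "\<rho>\<^sub>0 + of_nat i \<notin> F"
    unfolding image_subset_iff by auto
  have "cmod (\<tau> - (\<rho>\<^sub>0 + of_nat i)) \<le> cmod (\<tau> - \<rho>\<^sub>0) + i"
    using norm_triangle_ineq4[of "\<tau> - \<rho>\<^sub>0" "of_nat i"] by (simp add: algebra_simps)
  also have "\<dots> \<le> (1 + sqrt D) / 2 + card F"
    using \<rho>\<^sub>0(2) i(1) by linarith
  finally show ?thesis
    using \<rho>\<^sub>0(1) i(2) by (intro that[of "\<rho>\<^sub>0 + of_nat i"]) auto
qed

lemma zsqrt_multiple_near_avoiding:
  assumes "D > 0" "finite S" "g \<noteq> 0"
  obtains \<rho> where "\<rho> \<in> zsqrt D" "g * \<rho> \<notin> S"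
    "dist z (g * \<rho>) \<le> cmod g * ((1 + sqrt D) / 2 + card S)"
proof -
  obtain \<rho> where \<rho>: "\<rho> \<in> zsqrt D" "\<rho> \<notin> (\<lambda>q. q / g) ` S"
    and near: "cmod (z / g - \<rho>) \<le> (1 + sqrt D) / 2 + card ((\<lambda>q. q / g) ` S)"
    by (rule zsqrt_near_avoiding[OF assms(1) finite_imageI[OF assms(2)]]) (rule that)
  have "g * \<rho> \<notin> S"
    using \<rho>(2) assms(3) by (metis image_eqI nonzero_mult_div_cancel_left)
  have "real (card ((\<lambda>q. q / g) ` S)) \<le> card S"
    using card_image_le[OF assms(2)] by simp
  with near have close: "cmod (z / g - \<rho>) \<le> (1 + sqrt D) / 2 + card S"
    by linarith
  have "z - g * \<rho> = g * (z / g - \<rho>)"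
    using assms(3) by (simp add: right_diff_distrib)
  then have "dist z (g * \<rho>) = cmod g * cmod (z / g - \<rho>)"
    by (simp add: dist_norm norm_mult)
  also have "\<dots> \<le> cmod g * ((1 + sqrt D) / 2 + card S)"
    using close by (simp add: mult_left_mono)
  finally show ?thesis
    by (rule that[OF \<rho>(1) \<open>g * \<rho> \<notin> S\<close>])
qed

lemma int_multiple_in_zsqrt_multiples_of_power:
  assumes "c \<in> quad_field D" "c \<noteq> 0"
  obtains e :: int where "e > 0"
    "\<And>\<rho>. \<rho> \<in> zsqrt D \<Longrightarrow> \<exists>\<rho>'\<in>zsqrt D. of_int e * \<rho> = c ^ n * \<rho>'"
proof -
  obtain q where q: "q > 0" "of_int q * c \<in> zsqrt D"
    using assms(1) by (rule quad_field_int_multiple_in_zsqrt)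
  define \<alpha> where "\<alpha> = of_int q * c"
  have "\<alpha> \<in> zsqrt D"
    using q(2) by (simp add: \<alpha>_def)
  obtain N where N: "(cmod \<alpha>)\<^sup>2 = of_int N"
    using zsqrt_norm_Ints[OF \<open>\<alpha> \<in> zsqrt D\<close>] by (meson Ints_cases)
  have "\<alpha> \<noteq> 0" using q(1) assms(2) by (simp add: \<alpha>_def)
  then have "N > 0" using N by (metis of_int_0_less_iff zero_less_norm_iff zero_less_power)
  have "\<alpha> * cnj \<alpha> = of_int N"
    using complex_norm_square[of \<alpha>] N by simp
  show ?thesis
  proof (rule that[of "N ^ n"])
    show "N ^ n > 0" using \<open>N > 0\<close> by simp
    fix \<rho> assume "\<rho> \<in> zsqrt D"
    have "of_int (N ^ n) * \<rho> = (\<alpha> * cnj \<alpha>) ^ n * \<rho>"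
      by (simp add: \<open>\<alpha> * cnj \<alpha> = of_int N\<close>)
    also have "\<dots> = c ^ n * (of_int q ^ n * cnj \<alpha> ^ n * \<rho>)"
      by (simp add: \<alpha>_def power_mult_distrib mult_ac)
    finally have "of_int (N ^ n) * \<rho> = c ^ n * (of_int q ^ n * cnj \<alpha> ^ n * \<rho>)" .
    moreover have "of_int q ^ n * cnj \<alpha> ^ n * \<rho> \<in> zsqrt D"
      using \<open>\<alpha> \<in> zsqrt D\<close> \<open>\<rho> \<in> zsqrt D\<close> by auto
    ultimately show "\<exists>\<rho>'\<in>zsqrt D. of_int (N ^ n) * \<rho> = c ^ n * \<rho>'"
      by blast
  qed
qed

lemma cball_quarter_subset_unit_squares:
  fixes z :: complex
  defines "A \<equiv> \<lfloor>Re z - 1/4\<rfloor>" and "B \<equiv> \<lfloor>Im z - 1/4\<rfloor>"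
  shows "cball z (1/4) \<subseteq> (\<Union>(m, n) \<in> {A, A + 1} \<times> {B, B + 1}. unit_square m n)"
proof
  have floor_near: "\<lfloor>u\<rfloor> \<in> {\<lfloor>v - 1/4\<rfloor>, \<lfloor>v - 1/4\<rfloor> + 1}" if "\<bar>u - v\<bar> \<le> 1/4" for u v :: real
  proof -
    have "\<lfloor>v - 1/4\<rfloor> \<le> \<lfloor>u\<rfloor>" "\<lfloor>u\<rfloor> \<le> \<lfloor>v - 1/4 + 1\<rfloor>"
      using that by (intro floor_mono; linarith)+
    moreover have "\<lfloor>v - 1/4 + 1\<rfloor> = \<lfloor>v - 1/4\<rfloor> + 1"
      by (metis floor_add_int of_int_1)
    ultimately show ?thesis
      by auto
  qed
  fix y assume "y \<in> cball z (1/4)"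
  then have "\<bar>Re y - Re z\<bar> \<le> 1/4" "\<bar>Im y - Im z\<bar> \<le> 1/4"
    using abs_Re_le_cmod[of "y - z"] abs_Im_le_cmod[of "y - z"] by (auto simp: dist_norm norm_minus_commute)
  then have "(\<lfloor>Re y\<rfloor>, \<lfloor>Im y\<rfloor>) \<in> {A, A + 1} \<times> {B, B + 1}"
    unfolding A_def B_def using floor_near by blast
  moreover have "y \<in> unit_square \<lfloor>Re y\<rfloor> \<lfloor>Im y\<rfloor>"
    unfolding unit_square_def using floor_correct[of "Re y"] floor_correct[of "Im y"] by auto
  ultimately show "y \<in> (\<Union>(m, n) \<in> {A, A + 1} \<times> {B, B + 1}. unit_square m n)"
    by blast
qed

lemma BC_property_bounded_in_cballs:
  assumes "BC_property A"
  shows "\<exists>K. \<forall>z. finite (A \<inter> cball z (1/4)) \<and> card (A \<inter> cball z (1/4)) < K"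
proof -
  obtain K where K: "\<And>m n. finite (A \<inter> unit_square m n)" "\<And>m n. card (A \<inter> unit_square m n) < K"
    using assms unfolding BC_property_def by blast
  have "finite (A \<inter> cball z (1/4)) \<and> card (A \<inter> cball z (1/4)) < 4 * K" for z
  proof -
    define T where "T = {\<lfloor>Re z - 1/4\<rfloor>, \<lfloor>Re z - 1/4\<rfloor> + 1} \<times> {\<lfloor>Im z - 1/4\<rfloor>, \<lfloor>Im z - 1/4\<rfloor> + 1}"
    have "finite T" "T \<noteq> {}" "card T \<le> 4"
      unfolding T_def by (simp_all add: card_cartesian_product card_insert_if)
    define F where "F p = A \<inter> unit_square (fst p) (snd p)" for p
    have "A \<inter> cball z (1/4) \<subseteq> (\<Union>p \<in> T. F p)"
      using cball_quarter_subset_unit_squares[of z] unfolding T_def F_def by auto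
    moreover have "finite (\<Union>p \<in> T. F p)"
      using \<open>finite T\<close> K(1) unfolding F_def by (intro finite_UN_I)
    moreover have "card (\<Union>p \<in> T. F p) < 4 * K"
    proof -
      have "card (\<Union>p \<in> T. F p) \<le> (\<Sum>p \<in> T. card (F p))"
        using \<open>finite T\<close> by (rule card_UN_le)
      also have "\<dots> < (\<Sum>p \<in> T. K)"
        using \<open>finite T\<close> \<open>T \<noteq> {}\<close> K(2) by (intro sum_strict_mono) (simp_all add: F_def)
      also have "\<dots> \<le> 4 * K"
        using \<open>card T \<le> 4\<close> by simp
      finally show ?thesis .
    qed
    ultimately show ?thesis
      by (meson card_mono finite_subset le_less_trans)
  qed
  then show ?thesis
    by blast
qed

locale nonintegral_multiplier =
  fixes D M1 :: nat and c :: complex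
  assumes D_pos: "D > 0" and M1_pos: "M1 > 0"
    and c_in_field: "c \<in> quad_field D" and c_not_integral: "c \<notin> ring_of_integers D"
begin

lemma c_nonzero: "c \<noteq> 0"
  using c_not_integral zsqrt_subset_ring_of_integers zsqrt_of_int[of 0 D] by auto

lemma Delta_cI: "x \<in> zsqrt D \<Longrightarrow> of_nat M1 * x * c ^ 2 ^ m \<in> Delta_c D M1 c"
  unfolding Delta_c_def using zsqrt_subset_ring_of_integers by blast

lemma exists_power_not_in_zsqrt:
  assumes "h \<noteq> 0"
  shows "\<exists>m. of_int h * c ^ 2 ^ m \<notin> zsqrt D"
  using algebraic_int_if_multiples_of_powers_in_zsqrt[OF c_in_field assms] c_in_field c_not_integral
  unfolding ring_of_integers_def by blast

lemma small_combination:
  assumes "s > 0" "\<delta> > 0"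
  obtains m x y where "x \<in> zsqrt D" "y \<in> zsqrt D"
    "of_nat M1 * c ^ 2 ^ m * x + of_int s * y \<noteq> 0"
    "cmod (of_nat M1 * c ^ 2 ^ m * x + of_int s * y) < \<delta>"
proof -
  obtain L :: nat where L: "s * (1 + sqrt D) / \<delta> < L"
    using reals_Archimedean2 by blast
  moreover have "s * (1 + sqrt D) / \<delta> > 0"
    using assms by (intro divide_pos_pos mult_pos_pos add_pos_nonneg) auto
  ultimately have "real L > 0"
    by linarith
  then have "L > 0" "s * (1 + sqrt D) / L < \<delta>"
    using L assms(2) by (simp_all add: field_simps)
  \<comment> \<open>a collision \<open>k * M1 * c ^ 2 ^ m = s * \<rho>\<close> with \<open>0 < k \<le> L\<^sup>2\<close> would put \<open>h * c ^ 2 ^ m\<close> into \<open>zsqrt D\<close>\<close>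
  define h where "h = int (fact (L\<^sup>2)) * int M1"
  obtain m where m: "of_int h * c ^ 2 ^ m \<notin> zsqrt D"
    using exists_power_not_in_zsqrt[of h] M1_pos by (auto simp: h_def)
  define w where "w k = of_nat M1 * c ^ 2 ^ m * of_nat k" for k
  obtain i j \<rho> where ij: "i < j" "j \<le> L\<^sup>2" "\<rho> \<in> zsqrt D"
    and close: "cmod (w j - w i - of_real (of_int s) * \<rho>) < s * (1 + sqrt D) / L"
    using pigeonhole_close_mod_zsqrt[OF D_pos _ \<open>L > 0\<close>, of "of_int s" w] assms(1) by auto
  define g where "g = of_nat M1 * c ^ 2 ^ m * of_nat (j - i) + of_int s * (- \<rho>)"
  have "g = w j - w i - of_real (of_int s) * \<rho>"
    using ij(1) by (simp add: g_def w_def of_nat_diff algebra_simps)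
  have "g \<noteq> 0"
  proof
    assume "g = 0"
    have "j - i dvd fact (L\<^sup>2)"
      using ij(1,2) by (intro dvd_fact) auto
    then obtain q where q: "fact (L\<^sup>2) = (j - i) * q"
      by (elim dvdE)
    have "of_int h * c ^ 2 ^ m = of_nat q * (of_nat M1 * c ^ 2 ^ m * of_nat (j - i))"
      by (simp add: h_def q mult_ac)
    also have "\<dots> = of_nat q * (of_int s * \<rho>)"
      using \<open>g = 0\<close> by (simp add: g_def)
    finally show False
      using m ij(3) by auto
  qed
  then show ?thesis
    using ij(3) close \<open>s * (1 + sqrt D) / L < \<delta>\<close> \<open>g = w j - w i - _\<close>
    by (intro that[of "of_nat (j - i)" "- \<rho>" m]) (auto simp: g_def)
qed

definition shift_closed :: "complex set \<Rightarrow> int \<Rightarrow> bool" where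
  "shift_closed S s \<longleftrightarrow> s > 0 \<and> (\<forall>y\<in>S. \<forall>\<rho>\<in>zsqrt D. y + of_int s * \<rho> \<in> Delta_c D M1 c)"

lemma shift_closed_subset: "shift_closed S s \<Longrightarrow> S \<subseteq> Delta_c D M1 c"
  unfolding shift_closed_def using zsqrt_of_int[of 0 D] by fastforce

lemma shift_closed_empty: "shift_closed {} 1"
  by (simp add: shift_closed_def)

lemma shift_closed_insert: "shift_closed {p} s \<Longrightarrow> shift_closed S s \<Longrightarrow> shift_closed (insert p S) s"
  by (simp add: shift_closed_def)

lemma shift_closed_mult:
  assumes "shift_closed S s" "e > 0"
  shows "shift_closed S (s * e)"
  unfolding shift_closed_def
proof (intro conjI ballI)
  show "s * e > 0"
    using assms by (simp add: shift_closed_def)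
  fix y \<rho> assume "y \<in> S" "\<rho> \<in> zsqrt D"
  have "y + of_int (s * e) * \<rho> = y + of_int s * (of_int e * \<rho>)"
    by (simp add: mult_ac)
  moreover have "y + of_int s * (of_int e * \<rho>) \<in> Delta_c D M1 c"
    using assms(1) \<open>y \<in> S\<close> zsqrt_mult[OF zsqrt_of_int \<open>\<rho> \<in> zsqrt D\<close>]
    unfolding shift_closed_def by blast
  ultimately show "y + of_int (s * e) * \<rho> \<in> Delta_c D M1 c"
    by metis
qed

lemma shift_closed_translate:
  assumes "shift_closed S s" "y \<in> zsqrt D"
  shows "shift_closed ((\<lambda>q. q + of_int s * y) ` S) s"
  unfolding shift_closed_def
proof (intro conjI ballI)
  show "s > 0"
    using assms(1) by (simp add: shift_closed_def)
  fix q' \<rho> assume "q' \<in> (\<lambda>q. q + of_int s * y) ` S" "\<rho> \<in> zsqrt D"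
  then obtain q where "q \<in> S" "q' + of_int s * \<rho> = q + of_int s * (y + \<rho>)"
    by (auto simp: algebra_simps)
  then show "q' + of_int s * \<rho> \<in> Delta_c D M1 c"
    using assms \<open>\<rho> \<in> zsqrt D\<close> by (simp add: shift_closed_def zsqrt_add)
qed

lemma shift_closed_Delta_c_point:
  assumes "x \<in> zsqrt D"
  obtains e where "shift_closed {of_nat M1 * x * c ^ 2 ^ m} e"
proof -
  obtain e where e: "e > 0"
    "\<And>\<rho>. \<rho> \<in> zsqrt D \<Longrightarrow> \<exists>\<rho>'\<in>zsqrt D. of_int e * \<rho> = c ^ 2 ^ m * \<rho>'"
    using int_multiple_in_zsqrt_multiples_of_power[OF c_in_field c_nonzero] by metis
  have "of_nat M1 * x * c ^ 2 ^ m + of_int (int M1 * e) * \<rho> \<in> Delta_c D M1 c"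
    if "\<rho> \<in> zsqrt D" for \<rho>
  proof -
    obtain \<rho>' where "\<rho>' \<in> zsqrt D" "of_int e * \<rho> = c ^ 2 ^ m * \<rho>'"
      using e(2) \<open>\<rho> \<in> zsqrt D\<close> by blast
    then have "of_nat M1 * x * c ^ 2 ^ m + of_int (int M1 * e) * \<rho> = of_nat M1 * (x + \<rho>') * c ^ 2 ^ m"
      by (simp add: algebra_simps)
    with \<open>\<rho>' \<in> zsqrt D\<close> show ?thesis
      using Delta_cI assms by auto
  qed
  then show ?thesis
    using e(1) M1_pos by (intro that[of "int M1 * e"]) (simp add: shift_closed_def)
qed

lemma small_combination_near_avoiding:
  assumes "s > 0" "finite S"
  obtains m x y where "x \<in> zsqrt D" "y \<in> zsqrt D"
    "of_nat M1 * c ^ 2 ^ m * x + of_int s * y \<notin> S"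
    "dist z (of_nat M1 * c ^ 2 ^ m * x + of_int s * y) \<le> 1/4"
proof -
  define r where "r = (1 + sqrt D) / 2 + card S"
  have "r > 0"
    unfolding r_def by (simp add: add_pos_nonneg)
  then have "1 / (4 * r) > 0"
    by simp
  then obtain m x0 y0 where x0: "x0 \<in> zsqrt D" and y0: "y0 \<in> zsqrt D"
    and g: "of_nat M1 * c ^ 2 ^ m * x0 + of_int s * y0 \<noteq> 0"
      "cmod (of_nat M1 * c ^ 2 ^ m * x0 + of_int s * y0) < 1 / (4 * r)"
    by (rule small_combination[OF \<open>s > 0\<close>]) (rule that)
  define g where "g = of_nat M1 * c ^ 2 ^ m * x0 + of_int s * y0"
  have "g \<noteq> 0"
    using g(1) by (simp add: g_def)
  then obtain \<rho> where \<rho>: "\<rho> \<in> zsqrt D" "g * \<rho> \<notin> S"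
    and near: "dist z (g * \<rho>) \<le> cmod g * ((1 + sqrt D) / 2 + card S)"
    by (rule zsqrt_multiple_near_avoiding[OF D_pos assms(2)]) (rule that)
  have "cmod g * r < 1 / (4 * r) * r"
    using g(2) \<open>r > 0\<close> unfolding g_def by (rule mult_strict_right_mono)
  also have "1 / (4 * r) * r = 1 / 4"
    using \<open>r > 0\<close> by simp
  finally have "dist z (g * \<rho>) \<le> 1/4"
    using near by (simp add: r_def)
  moreover have "g * \<rho> = of_nat M1 * c ^ 2 ^ m * (x0 * \<rho>) + of_int s * (y0 * \<rho>)"
    by (simp add: g_def algebra_simps)
  ultimately show ?thesis
    using x0 y0 \<rho> by (intro that[of "x0 * \<rho>" "y0 * \<rho>" m]) auto
qed

lemma shift_closed_cluster_grow:
  assumes "shift_closed S s" "finite S" "S \<subseteq> cball z (1/4)"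
  obtains S' z' s' where "shift_closed S' s'" "finite S'" "card S' = Suc (card S)"
    "S' \<subseteq> cball z' (1/4)"
proof -
  have "s > 0"
    using assms(1) by (simp add: shift_closed_def)
  then obtain m x y where x: "x \<in> zsqrt D" and y: "y \<in> zsqrt D"
    and new: "of_nat M1 * c ^ 2 ^ m * x + of_int s * y \<notin> S"
      "dist z (of_nat M1 * c ^ 2 ^ m * x + of_int s * y) \<le> 1/4"
    by (rule small_combination_near_avoiding[OF _ assms(2)]) (rule that)
  define p where "p = of_nat M1 * c ^ 2 ^ m * x + of_int s * y"
  define t where "t = of_int s * (- y)"
  define T where "T = (\<lambda>q. q + t) ` S"
  obtain e where "shift_closed {of_nat M1 * x * c ^ 2 ^ m} e"
    using x by (rule shift_closed_Delta_c_point)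
  moreover have "p + t = of_nat M1 * x * c ^ 2 ^ m"
    by (simp add: p_def t_def)
  ultimately have e: "shift_closed {p + t} e"
    by simp
  then have "e > 0"
    unfolding shift_closed_def by blast
  have "shift_closed T s"
    unfolding T_def t_def using assms(1) y by (intro shift_closed_translate zsqrt_uminus)
  show ?thesis
  proof (rule that)
    have "shift_closed {p + t} (s * e)"
      using shift_closed_mult[OF e \<open>s > 0\<close>] by (simp only: mult.commute)
    then show "shift_closed (insert (p + t) T) (s * e)"
      using shift_closed_mult[OF \<open>shift_closed T s\<close> \<open>e > 0\<close>] by (rule shift_closed_insert)
    show "finite (insert (p + t) T)"
      using assms(2) by (simp add: T_def)
    have "card T = card S"
      unfolding T_def by (rule card_image) (simp add: inj_on_def)
    moreover have "p + t \<notin> T"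
      using new(1) by (auto simp: T_def p_def)
    ultimately show "card (insert (p + t) T) = Suc (card S)"
      using assms(2) by (simp add: T_def)
    show "insert (p + t) T \<subseteq> cball (z + t) (1/4)"
      using assms(3) new(2)[folded p_def] by (auto simp: T_def dist_add_cancel2)
  qed
qed

lemma Delta_c_clusters:
  obtains S z where "finite S" "card S = k" "S \<subseteq> Delta_c D M1 c \<inter> cball z (1/4)"
proof -
  have "\<exists>S z s. shift_closed S s \<and> finite S \<and> card S = k \<and> S \<subseteq> cball z (1/4)"
  proof (induction k)
    case 0
    show ?case
      using shift_closed_empty by (metis finite.emptyI card.empty empty_subsetI)
  next
    case (Suc k)
    then obtain S z s where "shift_closed S s" "finite S" "card S = k" "S \<subseteq> cball z (1/4)"
      by blast
    then obtain S' z' s' where "shift_closed S' s'" "finite S'" "card S' = Suc k" "S' \<subseteq> cball z' (1/4)"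
      by (metis shift_closed_cluster_grow)
    then show ?case
      by blast
  qed
  then show ?thesis
    using shift_closed_subset that by blast
qed

end

theorem lemma4p4:
  fixes D M1 :: nat and c :: complex
  assumes "D > 0" and "squarefree D" and "M1 > 0"
    and "c \<in> quad_field D" and "c \<notin> ring_of_integers D"
  shows "\<not> BC_property (Delta_c D M1 c)"
proof
  assume "BC_property (Delta_c D M1 c)"
  then obtain K where K: "\<And>z. finite (Delta_c D M1 c \<inter> cball z (1/4))"
    "\<And>z. card (Delta_c D M1 c \<inter> cball z (1/4)) < K"
    using BC_property_bounded_in_cballs by blast
  interpret nonintegral_multiplier D M1 c
    using assms(1,3-5) by unfold_locales
  obtain S z where "finite S" "card S = K" "S \<subseteq> Delta_c D M1 c \<inter> cball z (1/4)"
    by (rule Delta_c_clusters)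
  then have "K \<le> card (Delta_c D M1 c \<inter> cball z (1/4))"
    using card_mono[OF K(1)] by metis
  with K(2)[of z] show False
    by simp
qed

end
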